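(* Let $R>0$ and $q>0$ be fixed, and for $M\ge2$ let $\tau_M=\frac{R}{q\ln M}$. Define $$\mathcal{E}(\tau)=\mathbb{E}\left[\frac{e^{U_1/\sqrt{\tau}}}{e^{U_1/\sqrt\tau}+e^{-1/\tau}\sum_{j=2}^Me^{U_j/\sqrt\tau}}\right],$$ with $U_1,\dots,U_M$ i.i.d. $\mathcal{N}(0,1)$. Then $\lim_{M\to\infty}\mathcal{E}(\tau_M)=1$ if $q>2R$ and $\lim_{M\to\infty}\mathcal{E}(\tau_M)=0$ if $q<2R$. (In the spatially coupled state evolution, $q=\frac{1}{L_R}\sum_{r=1}^{L_R}W_{rc}/\phi^t_r$.)
   Context: In spatially coupled SPARC state evolution, $\tau^t_c=\frac{R}{\ln M}\big[\frac{1}{L_R}\sum_r\frac{W_{rc}}{\phi^t_r}\big]^{-1}$ for a base matrix $W\in\mathbb{R}^{L_R\times L_C}$ with nonnegative entries and positive numbers $\phi^t_r$; $R$ is the rate in nats. *)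

theory Defs
  imports "HOL-Probability.Probability"
begin

definition gauss_iid :: "nat \<Rightarrow> (nat \<Rightarrow> real) measure" where
  "gauss_iid M = PiM {1..M} (\<lambda>_. density lborel std_normal_density)"

definition sparc_E :: "nat \<Rightarrow> real \<Rightarrow> real" where
  "sparc_E M \<tau> = (\<integral>U. exp (U 1 / sqrt \<tau>) /
      (exp (U 1 / sqrt \<tau>) + exp (- 1 / \<tau>) * (\<Sum>j=2..M. exp (U j / sqrt \<tau>))) \<partial>gauss_iid M)"

end

theory Submission
  imports Defs "HOL-Real_Asymp.Real_Asymp"
begin

text \<open>
  Put \<open>a = 1 / sqrt \<tau> = sqrt (c * ln M)\<close> with \<open>c = q / R\<close>, so that the integrand is
  \<open>X / (X + exp (- a\<^sup>2) * S)\<close> with \<open>X = exp (a * U\<^sub>1)\<close> and \<open>S = \<Sum>j\<ge>2. exp (a * U\<^sub>j)\<close>.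
  Since \<open>E S = (M - 1) * exp (a\<^sup>2 / 2)\<close>, the competing mass \<open>exp (- a\<^sup>2) * S\<close> has mean of order
  \<open>M powr (1 - c / 2)\<close>.

  If \<open>c > 2\<close> this mean tends to zero: on \<open>U\<^sub>1 \<ge> - t\<close> the ratio misses 1 by at most
  \<open>exp (a * t - a\<^sup>2) * S\<close>, whose mean is small by Markov's inequality, and
  \<open>P (U\<^sub>1 < - t) \<le> exp (1 / 2 - t)\<close>.

  If \<open>c < 2\<close> the mean tends to infinity, and \<open>S\<close> concentrates around it: truncating each
  \<open>exp (a * U\<^sub>j)\<close> at \<open>U\<^sub>j = a + 2\<close> keeps the mean but tames the second moment, so Chebyshev's
  inequality applies. On \<open>U\<^sub>1 \<le> t\<close> the numerator is at most \<open>exp (a * t)\<close>.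

  In both cases \<open>t\<close> is a multiple of \<open>sqrt (ln M)\<close>, so that \<open>a * t\<close> is a small multiple of
  \<open>ln M\<close> while \<open>exp (- t)\<close> still vanishes.
\<close>

abbreviation std_normal :: "real measure" where
  "std_normal \<equiv> density lborel std_normal_density"

interpretation std_normal: prob_space std_normal
  using prob_space_normal_density by simp

lemma std_normal_density_mult_exp:
  "std_normal_density u * exp (l * u) = exp (l\<^sup>2 / 2) * normal_density l 1 u"
proof -
  have "exp (- u\<^sup>2 / 2) * exp (l * u) = exp (l\<^sup>2 / 2) * exp (- (u - l)\<^sup>2 / 2)"
    unfolding exp_add[symmetric] by (simp add: power2_eq_square field_simps)
  then show ?thesis unfolding std_normal_density_def normal_density_def by simp
qed

lemma integrable_std_normal_exp: "integrable std_normal (\<lambda>u. exp (l * u))"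
  by (subst integrable_density) (auto simp: std_normal_density_mult_exp)

lemma integral_std_normal_exp: "(\<integral>u. exp (l * u) \<partial>std_normal) = exp (l\<^sup>2 / 2)"
  by (subst integral_density) (auto simp: std_normal_density_mult_exp)

context prob_space
begin

lemma
  fixes g :: "'a \<Rightarrow> real"
  assumes i: "i \<in> I" and g[measurable]: "g \<in> borel_measurable M"
  shows integrable_PiM_component_iff:
      "integrable (PiM I (\<lambda>_. M)) (\<lambda>x. g (x i)) \<longleftrightarrow> integrable M g"
    and integral_PiM_component: "(\<integral>x. g (x i) \<partial>PiM I (\<lambda>_. M)) = (\<integral>u. g u \<partial>M)"
proof -
  have distr: "distr (PiM I (\<lambda>_. M)) M (\<lambda>x. x i) = M"
    by (rule distr_PiM_component) (use i prob_space_axioms in auto)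
  have "(\<lambda>x. x i) \<in> measurable (PiM I (\<lambda>_. M)) M"
    using i by simp
  from integrable_distr_eq[OF this g] integral_distr[OF this g]
  show "integrable (PiM I (\<lambda>_. M)) (\<lambda>x. g (x i)) \<longleftrightarrow> integrable M g"
    and "(\<integral>x. g (x i) \<partial>PiM I (\<lambda>_. M)) = (\<integral>u. g u \<partial>M)"
    unfolding distr by simp_all
qed

lemma
  fixes f g :: "'a \<Rightarrow> real" and I :: "'i set"
  assumes I: "finite I" and ij: "i \<in> I" "j \<in> I" "i \<noteq> j"
    and f: "integrable M f" and g: "integrable M g"
  shows integrable_PiM_two_components:
      "integrable (PiM I (\<lambda>_. M)) (\<lambda>x. f (x i) * g (x j))"
    and integral_PiM_two_components:
      "(\<integral>x. f (x i) * g (x j) \<partial>PiM I (\<lambda>_. M)) = expectation f * expectation g"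
proof -
  interpret product: product_prob_space "\<lambda>_. M" I
    by unfold_locales
  define h where "h k = (if k = i then f else if k = j then g else (\<lambda>_. 1))" for k
  have h_int: "integrable M (h k)" for k
    using f g by (simp add: h_def)
  have prod_h: "(\<Prod>k\<in>I. F k) = F i * F j" if "\<And>k. k \<in> I \<Longrightarrow> k \<noteq> i \<Longrightarrow> k \<noteq> j \<Longrightarrow> F k = 1"
    for F :: "'i \<Rightarrow> real"
    using prod.mono_neutral_right[OF I, of "{i, j}" F] that ij by auto
  have prod_eq: "(\<lambda>x. \<Prod>k\<in>I. h k (x k)) = (\<lambda>x. f (x i) * g (x j))"
    by (subst prod_h) (use ij in \<open>auto simp: h_def\<close>)
  have "(\<Prod>k\<in>I. integral\<^sup>L M (h k)) = expectation f * expectation g"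
    by (subst prod_h) (use ij in \<open>auto simp: h_def prob_space\<close>)
  with product.product_integrable_prod[of I h] product.product_integral_prod[of I h]
  show "integrable (PiM I (\<lambda>_. M)) (\<lambda>x. f (x i) * g (x j))"
    and "(\<integral>x. f (x i) * g (x j) \<partial>PiM I (\<lambda>_. M)) = expectation f * expectation g"
    using I h_int unfolding prod_eq by simp_all
qed

lemma
  fixes f :: "'a \<Rightarrow> real" and I :: "'i set"
  assumes I: "finite I" and J: "J \<subseteq> I"
    and f: "integrable M f" and f2: "integrable M (\<lambda>u. (f u)\<^sup>2)"
  shows integrable_PiM_sum_centered_square:
      "integrable (PiM I (\<lambda>_. M)) (\<lambda>x. (\<Sum>j\<in>J. f (x j) - expectation f)\<^sup>2)"
    and integral_PiM_sum_centered_square: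
      "(\<integral>x. (\<Sum>j\<in>J. f (x j) - expectation f)\<^sup>2 \<partial>PiM I (\<lambda>_. M)) = card J * variance f"
proof -
  define g where "g u = f u - expectation f" for u
  have g: "integrable M g"
    unfolding g_def using f by simp
  have g2: "integrable M (\<lambda>u. (g u)\<^sup>2)"
    unfolding g_def power2_diff using f f2 by simp
  have Eg: "expectation g = 0"
    unfolding g_def using f by (simp add: prob_space)
  have g2_meas: "(\<lambda>u. (g u)\<^sup>2) \<in> borel_measurable M"
    using g2 by auto
  have sq: "(\<Sum>j\<in>J. f (x j) - expectation f)\<^sup>2 = (\<Sum>j\<in>J. \<Sum>k\<in>J. g (x j) * g (x k))" for x
    unfolding power2_eq_square g_def by (rule sum_product)
  have int: "integrable (PiM I (\<lambda>_. M)) (\<lambda>x. g (x j) * g (x k))" if "j \<in> J" "k \<in> J" for j k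
    using integrable_PiM_component_iff[OF _ g2_meas, of j I] g2 g
      integrable_PiM_two_components[OF I, of j k g g] that J
    by (cases "j = k") (auto simp: power2_eq_square)
  have val: "(\<integral>x. g (x j) * g (x k) \<partial>PiM I (\<lambda>_. M)) = (if j = k then variance f else 0)"
    if "j \<in> J" "k \<in> J" for j k
    using integral_PiM_component[OF _ g2_meas, of j I] g
      integral_PiM_two_components[OF I, of j k g g] that J Eg
    by (cases "j = k") (auto simp: power2_eq_square g_def)
  show "integrable (PiM I (\<lambda>_. M)) (\<lambda>x. (\<Sum>j\<in>J. f (x j) - expectation f)\<^sup>2)"
    unfolding sq using int by auto
  have "(\<integral>x. (\<Sum>j\<in>J. f (x j) - expectation f)\<^sup>2 \<partial>PiM I (\<lambda>_. M))
      = (\<Sum>j\<in>J. \<Sum>k\<in>J. \<integral>x. g (x j) * g (x k) \<partial>PiM I (\<lambda>_. M))"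
    unfolding sq using int by (simp add: Bochner_Integration.integral_sum)
  also have "\<dots> = (\<Sum>j\<in>J. \<Sum>k\<in>J. if j = k then variance f else 0)"
    using val by (intro sum.cong) auto
  also have "\<dots> = card J * variance f"
    using I J by (simp add: finite_subset)
  finally show "(\<integral>x. (\<Sum>j\<in>J. f (x j) - expectation f)\<^sup>2 \<partial>PiM I (\<lambda>_. M)) = card J * variance f" .
qed

end

lemma prob_space_gauss_iid: "prob_space (gauss_iid M)"
  unfolding gauss_iid_def by (rule prob_space_PiM) (rule std_normal.prob_space_axioms)

lemma gauss_iid_component_measurable[measurable]:
  "j \<in> {1..M} \<Longrightarrow> (\<lambda>x. x j) \<in> borel_measurable (gauss_iid M)"
  unfolding gauss_iid_def by (simp add: measurable_cong_sets[OF refl sets_density])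

lemma
  assumes "j \<in> {1..M}"
  shows integrable_gauss_iid_exp: "integrable (gauss_iid M) (\<lambda>x. exp (l * x j))"
    and integral_gauss_iid_exp: "(\<integral>x. exp (l * x j) \<partial>gauss_iid M) = exp (l\<^sup>2 / 2)"
  using std_normal.integrable_PiM_component_iff[OF assms, of "\<lambda>u. exp (l * u)"]
    std_normal.integral_PiM_component[OF assms, of "\<lambda>u. exp (l * u)"]
  by (simp_all add: gauss_iid_def integrable_std_normal_exp integral_std_normal_exp)

lemma
  assumes "0 < M"
  shows integrable_gauss_iid_sum_exp: "integrable (gauss_iid M) (\<lambda>x. \<Sum>j=2..M. exp (l * x j))"
    and integral_gauss_iid_sum_exp:
      "(\<integral>x. (\<Sum>j=2..M. exp (l * x j)) \<partial>gauss_iid M) = (real M - 1) * exp (l\<^sup>2 / 2)"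
  using assms by (auto simp: integrable_gauss_iid_exp integral_gauss_iid_exp of_nat_diff)

definition sparc_ratio :: "nat \<Rightarrow> real \<Rightarrow> (nat \<Rightarrow> real) \<Rightarrow> real" where
  "sparc_ratio M a x =
     exp (a * x 1) / (exp (a * x 1) + exp (- a\<^sup>2) * (\<Sum>j=2..M. exp (a * x j)))"

lemma sparc_E_eq_integral_sparc_ratio:
  assumes "0 < \<tau>"
  shows "sparc_E M \<tau> = (\<integral>x. sparc_ratio M (1 / sqrt \<tau>) x \<partial>gauss_iid M)"
proof -
  define a where "a = 1 / sqrt \<tau>"
  have "u / sqrt \<tau> = a * u" for u
    unfolding a_def by simp
  moreover have "- 1 / \<tau> = - a\<^sup>2"
    unfolding a_def using assms by (simp add: power_divide)
  ultimately show ?thesis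
    unfolding sparc_E_def sparc_ratio_def a_def[symmetric] by simp
qed

lemma sparc_ratio_nonneg: "0 \<le> sparc_ratio M a x"
  and sparc_ratio_le_one: "sparc_ratio M a x \<le> 1"
proof -
  have "0 \<le> exp (- a\<^sup>2) * (\<Sum>j=2..M. exp (a * x j))"
    by (simp add: sum_nonneg)
  then show "0 \<le> sparc_ratio M a x" "sparc_ratio M a x \<le> 1"
    unfolding sparc_ratio_def by (simp_all add: add_pos_nonneg)
qed

lemma sparc_ratio_measurable[measurable]:
  "0 < M \<Longrightarrow> sparc_ratio M a \<in> borel_measurable (gauss_iid M)"
  unfolding sparc_ratio_def by measurable auto

lemma integrable_sparc_ratio: "0 < M \<Longrightarrow> integrable (gauss_iid M) (sparc_ratio M a)"
  by (rule finite_measure.integrable_const_bound[where B = 1])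
     (auto simp: prob_space_gauss_iid prob_space.finite_measure sparc_ratio_nonneg sparc_ratio_le_one)

lemma integral_sparc_ratio_nonneg: "0 \<le> (\<integral>x. sparc_ratio M a x \<partial>gauss_iid M)"
  by (rule integral_nonneg_AE) (simp add: sparc_ratio_nonneg)

lemma integral_sparc_ratio_le_one:
  "0 < M \<Longrightarrow> (\<integral>x. sparc_ratio M a x \<partial>gauss_iid M) \<le> 1"
  by (rule prob_space.integral_le_const[OF prob_space_gauss_iid])
     (simp_all add: integrable_sparc_ratio sparc_ratio_le_one)

lemma one_minus_sparc_ratio_le:
  assumes "0 < a"
  shows "1 - sparc_ratio M a x \<le> exp (a * t - a\<^sup>2) * (\<Sum>j=2..M. exp (a * x j)) + exp (- t) * exp (- x 1)"
proof -
  define S where "S = exp (- a\<^sup>2) * (\<Sum>j=2..M. exp (a * x j))"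
  define X where "X = exp (a * x 1)"
  have S: "0 \<le> S" and X: "0 < X"
    unfolding S_def X_def by (simp_all add: sum_nonneg)
  have ratio: "1 - sparc_ratio M a x = S / (X + S)"
    unfolding sparc_ratio_def S_def[symmetric] X_def[symmetric] using S X by (simp add: field_simps)
  have rhs: "exp (a * t - a\<^sup>2) * (\<Sum>j=2..M. exp (a * x j)) = exp (a * t) * S"
    unfolding S_def by (simp add: exp_diff exp_minus field_simps)
  show ?thesis
  proof (cases "- t \<le> x 1")
    case True
    then have "exp (- (a * t)) \<le> X"
      unfolding X_def using assms by (simp add: mult_left_mono[of "- t" "x 1" a, simplified])
    then have "1 \<le> exp (a * t) * X"
      by (simp add: exp_minus field_simps)
    have "S / (X + S) \<le> S / X"
      using S X by (simp add: frac_le)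
    also have "\<dots> \<le> exp (a * t) * S"
      using mult_left_mono[OF \<open>1 \<le> exp (a * t) * X\<close> S] X by (simp add: divide_le_eq ac_simps)
    finally show ?thesis
      unfolding ratio rhs by (simp add: add_increasing2)
  next
    case False
    have "S / (X + S) \<le> 1"
      using S X by simp
    also have "1 \<le> exp (- t) * exp (- x 1)"
      using False by (simp add: exp_add[symmetric])
    finally show ?thesis
      unfolding ratio rhs using S by (simp add: add_increasing)
  qed
qed

lemma one_minus_integral_sparc_ratio_le:
  assumes M: "0 < M" and a: "0 < a"
  shows "1 - (\<integral>x. sparc_ratio M a x \<partial>gauss_iid M)
    \<le> (real M - 1) * exp (a * t - a\<^sup>2 / 2) + exp (1 / 2 - t)"
proof -
  interpret prob_space "gauss_iid M"
    by (rule prob_space_gauss_iid)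
  have exp1: "integrable (gauss_iid M) (\<lambda>x. exp (- x 1))"
    "(\<integral>x. exp (- x 1) \<partial>gauss_iid M) = exp (1 / 2)"
    using integrable_gauss_iid_exp[of 1 M "- 1"] integral_gauss_iid_exp[of 1 M "- 1"] M by simp_all
  have "1 - (\<integral>x. sparc_ratio M a x \<partial>gauss_iid M) = (\<integral>x. 1 - sparc_ratio M a x \<partial>gauss_iid M)"
    using M by (simp add: integrable_sparc_ratio prob_space)
  also have "\<dots> \<le> (\<integral>x. exp (a * t - a\<^sup>2) * (\<Sum>j=2..M. exp (a * x j)) + exp (- t) * exp (- x 1)
      \<partial>gauss_iid M)"
    using M a exp1 by (intro integral_mono one_minus_sparc_ratio_le)
      (auto simp: integrable_sparc_ratio integrable_gauss_iid_sum_exp)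
  also have "\<dots> = exp (a * t - a\<^sup>2) * ((real M - 1) * exp (a\<^sup>2 / 2)) + exp (- t) * exp (1 / 2)"
    using M exp1 by (simp add: integrable_gauss_iid_sum_exp integral_gauss_iid_sum_exp)
  also have "\<dots> = (real M - 1) * exp (a * t - a\<^sup>2 / 2) + exp (1 / 2 - t)"
    by (simp add: exp_add[symmetric] exp_diff[symmetric] field_simps)
  finally show ?thesis .
qed

text \<open>Cutting \<open>exp (a * u)\<close> off at \<open>u = a + 2\<close> keeps its mean of order \<open>exp (a\<^sup>2 / 2)\<close>
  but lowers its second moment from \<open>exp (2 * a\<^sup>2)\<close> to \<open>exp (3 / 2 * a\<^sup>2 + 2 * a)\<close>, which makes
  Chebyshev's inequality effective for the sum of \<open>M - 1\<close> copies.\<close>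
definition truncated_exp :: "real \<Rightarrow> real \<Rightarrow> real" where
  "truncated_exp a u = (if u \<le> a + 2 then exp (a * u) else 0)"

lemma truncated_exp_measurable[measurable]: "truncated_exp a \<in> borel_measurable borel"
  unfolding truncated_exp_def by measurable

lemma truncated_exp_nonneg: "0 \<le> truncated_exp a u"
  by (simp add: truncated_exp_def)

lemma truncated_exp_le_exp: "truncated_exp a u \<le> exp (a * u)"
  by (simp add: truncated_exp_def)

lemma truncated_exp_le: "0 \<le> a \<Longrightarrow> truncated_exp a u \<le> exp (a * (a + 2))"
  by (simp add: truncated_exp_def mult_left_mono)

lemma integrable_truncated_exp: "0 \<le> a \<Longrightarrow> integrable std_normal (truncated_exp a)"
  by (rule std_normal.integrable_const_bound[where B = "exp (a * (a + 2))"])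
     (simp_all add: truncated_exp_nonneg truncated_exp_le)

lemma integrable_truncated_exp_square:
  "0 \<le> a \<Longrightarrow> integrable std_normal (\<lambda>u. (truncated_exp a u)\<^sup>2)"
  by (rule std_normal.integrable_const_bound[where B = "(exp (a * (a + 2)))\<^sup>2"])
     (simp_all add: truncated_exp_nonneg truncated_exp_le power_mono)

lemma expectation_truncated_exp_ge:
  assumes "0 \<le> a"
  shows "exp (a\<^sup>2 / 2) / 2 \<le> (\<integral>u. truncated_exp a u \<partial>std_normal)"
proof -
  \<comment> \<open>Above the cut, \<open>exp (a * u)\<close> is dominated by a multiple of \<open>exp ((a + 2) * u)\<close>.\<close>
  have lower: "exp (a * u) - exp (- 2 * (a + 2)) * exp ((a + 2) * u) \<le> truncated_exp a u" for u
  proof (cases "u \<le> a + 2")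
    case False
    then have "a * u \<le> - 2 * (a + 2) + (a + 2) * u"
      by (simp add: algebra_simps)
    then show ?thesis
      using False by (simp add: truncated_exp_def exp_add[symmetric])
  qed (simp add: truncated_exp_def)
  have "exp (- 2 :: real) \<le> 1 / 2"
    using exp_ge_add_one_self[of 2] by (simp add: exp_minus field_simps)
  moreover have "exp (- 2 * (a + 2)) * exp ((a + 2)\<^sup>2 / 2) = exp (- 2) * exp (a\<^sup>2 / 2)"
    by (simp add: exp_add[symmetric] power2_eq_square algebra_simps)
  ultimately have "exp (a\<^sup>2 / 2) / 2 \<le> exp (a\<^sup>2 / 2) - exp (- 2 * (a + 2)) * exp ((a + 2)\<^sup>2 / 2)"
    by simp
  also have "\<dots> = (\<integral>u. exp (a * u) - exp (- 2 * (a + 2)) * exp ((a + 2) * u) \<partial>std_normal)"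
    by (simp add: integrable_std_normal_exp integral_std_normal_exp)
  also have "\<dots> \<le> (\<integral>u. truncated_exp a u \<partial>std_normal)"
    using assms lower by (intro integral_mono) (simp_all add: integrable_std_normal_exp integrable_truncated_exp)
  finally show ?thesis .
qed

lemma second_moment_truncated_exp_le:
  assumes "0 \<le> a"
  shows "(\<integral>u. (truncated_exp a u)\<^sup>2 \<partial>std_normal) \<le> exp (a * (a + 2)) * exp (a\<^sup>2 / 2)"
proof -
  have "(truncated_exp a u)\<^sup>2 \<le> exp (a * (a + 2)) * exp (a * u)" for u
    using mult_mono[OF truncated_exp_le[OF assms] truncated_exp_le_exp] truncated_exp_nonneg[of a u]
    by (simp add: power2_eq_square)
  then have "(\<integral>u. (truncated_exp a u)\<^sup>2 \<partial>std_normal) \<le> (\<integral>u. exp (a * (a + 2)) * exp (a * u) \<partial>std_normal)"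
    using assms by (intro integral_mono) (simp_all add: integrable_std_normal_exp integrable_truncated_exp_square)
  then show ?thesis
    by (simp add: integral_std_normal_exp)
qed

lemma sparc_ratio_le_deviation:
  assumes a: "0 < a" and M: "1 \<le> M" and m: "0 < (real M - 1) * \<mu>"
  shows "sparc_ratio M a x
    \<le> 4 * (\<Sum>j=2..M. truncated_exp a (x j) - \<mu>)\<^sup>2 / ((real M - 1) * \<mu>)\<^sup>2
      + exp (- t) * exp (x 1) + 2 * exp (a * t + a\<^sup>2) / ((real M - 1) * \<mu>)"
    (is "_ \<le> ?dev + ?large + ?small")
proof -
  define m where "m = (real M - 1) * \<mu>"
  have m0: "0 < m"
    using m by (simp add: m_def)
  define Y where "Y = (\<Sum>j=2..M. truncated_exp a (x j))"
  define S where "S = (\<Sum>j=2..M. exp (a * x j))"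
  define X where "X = exp (a * x 1)"
  have Y: "0 \<le> Y" "Y \<le> S"
    unfolding Y_def S_def by (simp_all add: sum_nonneg sum_mono truncated_exp_nonneg truncated_exp_le_exp)
  have dev: "(\<Sum>j=2..M. truncated_exp a (x j) - \<mu>) = Y - m"
    unfolding Y_def m_def sum_subtractf using M by (simp add: of_nat_diff)
  have terms_nonneg: "0 \<le> ?dev" "0 \<le> ?large" "0 \<le> ?small"
    using m by simp_all
  note ratio_le_one = sparc_ratio_le_one[of M a x]
  consider "Y < m / 2" | "t < x 1" | "m / 2 \<le> Y" "x 1 \<le> t"
    by linarith
  then show ?thesis
  proof cases
    case 1
    \<comment> \<open>the Chebyshev event: the truncated sum deviates from its mean by at least half of it\<close>
    then have "(m / 2)\<^sup>2 \<le> (m - Y)\<^sup>2"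
      using m0 by (intro power_mono) simp_all
    then have "(m / 2)\<^sup>2 \<le> (Y - m)\<^sup>2"
      by (simp add: power2_commute)
    then have "1 \<le> ?dev"
      using m0 unfolding dev m_def[symmetric] by (simp add: field_simps power2_eq_square)
    then show ?thesis
      using ratio_le_one terms_nonneg by linarith
  next
    case 2
    then have "1 \<le> ?large"
      by (simp add: exp_add[symmetric])
    then show ?thesis
      using ratio_le_one terms_nonneg by linarith
  next
    case 3
    have "X \<le> exp (a * t)"
      unfolding X_def using a 3 by (simp add: mult_left_mono)
    have wS: "exp (- a\<^sup>2) * (m / 2) \<le> exp (- a\<^sup>2) * S"
      using 3 Y by simp
    have pos: "0 < exp (- a\<^sup>2) * (m / 2)"
      using m0 by simp
    have "sparc_ratio M a x = X / (X + exp (- a\<^sup>2) * S)"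
      unfolding sparc_ratio_def X_def S_def ..
    also have "\<dots> \<le> X / (exp (- a\<^sup>2) * S)"
      using wS pos m0 by (intro divide_left_mono) (auto simp: X_def intro!: mult_pos_pos add_pos_pos)
    also have "\<dots> \<le> exp (a * t) / (exp (- a\<^sup>2) * (m / 2))"
      using \<open>X \<le> exp (a * t)\<close> wS pos by (intro frac_le) (auto simp: X_def)
    also have "\<dots> = ?small"
      by (simp add: m_def exp_add exp_minus field_simps)
    finally show ?thesis
      using terms_nonneg by linarith
  qed
qed

lemma integral_sparc_ratio_le_moments:
  assumes M: "2 \<le> M" and a: "0 < a"
  defines "\<mu> \<equiv> std_normal.expectation (truncated_exp a)"
    and "V \<equiv> std_normal.variance (truncated_exp a)"
  shows "(\<integral>x. sparc_ratio M a x \<partial>gauss_iid M)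
    \<le> 4 * V / ((real M - 1) * \<mu>\<^sup>2) + exp (1 / 2 - t) + 2 * exp (a * t + a\<^sup>2) / ((real M - 1) * \<mu>)"
proof -
  interpret prob_space "gauss_iid M"
    by (rule prob_space_gauss_iid)
  have \<mu>: "0 < \<mu>"
    using expectation_truncated_exp_ge[of a] exp_gt_zero[of "a\<^sup>2 / 2"] a unfolding \<mu>_def by linarith
  have m: "0 < (real M - 1) * \<mu>"
    using M \<mu> by simp
  define D where "D = (\<lambda>x::nat \<Rightarrow> real. (\<Sum>j=2..M. truncated_exp a (x j) - \<mu>)\<^sup>2)"
  have D: "integrable (gauss_iid M) D" "(\<integral>x. D x \<partial>gauss_iid M) = (real M - 1) * V"
    using std_normal.integrable_PiM_sum_centered_square[of "{1..M}" "{2..M}" "truncated_exp a"]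
      std_normal.integral_PiM_sum_centered_square[of "{1..M}" "{2..M}" "truncated_exp a"] M a
    by (simp_all add: D_def \<mu>_def V_def gauss_iid_def integrable_truncated_exp
        integrable_truncated_exp_square of_nat_diff)
  have exp1: "integrable (gauss_iid M) (\<lambda>x. exp (x 1))"
    "(\<integral>x. exp (x 1) \<partial>gauss_iid M) = exp (1 / 2)"
    using integrable_gauss_iid_exp[of 1 M 1] integral_gauss_iid_exp[of 1 M 1] M by simp_all
  have "(\<integral>x. sparc_ratio M a x \<partial>gauss_iid M)
      \<le> (\<integral>x. 4 * D x / ((real M - 1) * \<mu>)\<^sup>2 + exp (- t) * exp (x 1)
            + 2 * exp (a * t + a\<^sup>2) / ((real M - 1) * \<mu>) \<partial>gauss_iid M)"
    unfolding D_def using a M m D exp1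
    by (intro integral_mono sparc_ratio_le_deviation) (auto simp: integrable_sparc_ratio D_def)
  also have "\<dots> = 4 * ((real M - 1) * V) / ((real M - 1) * \<mu>)\<^sup>2 + exp (- t) * exp (1 / 2)
      + 2 * exp (a * t + a\<^sup>2) / ((real M - 1) * \<mu>)"
    using D exp1 by (simp add: prob_space)
  also have "\<dots> = 4 * V / ((real M - 1) * \<mu>\<^sup>2) + exp (1 / 2 - t)
      + 2 * exp (a * t + a\<^sup>2) / ((real M - 1) * \<mu>)"
  proof -
    have "4 * ((real M - 1) * V) / ((real M - 1) * \<mu>)\<^sup>2 = 4 * V / ((real M - 1) * \<mu>\<^sup>2)"
      using M by (simp add: power2_eq_square)
    moreover have "exp (- t) * exp (1 / 2) = exp (1 / 2 - t)"
      by (simp flip: exp_add)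
    ultimately show ?thesis
      by simp
  qed
  finally show ?thesis .
qed

lemma integral_sparc_ratio_le:
  assumes M: "2 \<le> M" and a: "0 < a"
  shows "(\<integral>x. sparc_ratio M a x \<partial>gauss_iid M)
    \<le> (16 * exp (a\<^sup>2 / 2 + 2 * a) + 4 * exp (a * t + a\<^sup>2 / 2)) / (real M - 1) + exp (1 / 2 - t)"
proof -
  define \<mu> where "\<mu> = std_normal.expectation (truncated_exp a)"
  define V where "V = std_normal.variance (truncated_exp a)"
  define N where "N = real M - 1"
  have N: "1 \<le> N"
    using M by (simp add: N_def)
  have \<mu>: "exp (a\<^sup>2 / 2) / 2 \<le> \<mu>"
    unfolding \<mu>_def by (rule expectation_truncated_exp_ge) (use a in simp)
  have V: "V \<le> exp (a * (a + 2)) * exp (a\<^sup>2 / 2)"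
    using std_normal.variance_eq[OF integrable_truncated_exp integrable_truncated_exp_square, of a]
      second_moment_truncated_exp_le[of a] zero_le_power2[of \<mu>] a
    unfolding V_def \<mu>_def by linarith
  have \<mu>_pos: "0 < \<mu>"
    using \<mu> exp_gt_zero[of "a\<^sup>2 / 2"] by linarith
  have deviation: "4 * V / (N * \<mu>\<^sup>2) \<le> 16 * exp (a\<^sup>2 / 2 + 2 * a) / N"
  proof -
    have \<mu>2: "exp (a\<^sup>2) / 4 \<le> \<mu>\<^sup>2"
      using power_mono[OF \<mu>, of 2] by (simp add: power_divide power2_eq_square flip: exp_add)
    have "exp (a * (a + 2)) * exp (a\<^sup>2 / 2) = exp (a\<^sup>2 / 2 + 2 * a) * exp (a\<^sup>2)"
      by (simp add: power2_eq_square algebra_simps flip: exp_add)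
    moreover have "4 * V / (N * \<mu>\<^sup>2) \<le> 4 * (exp (a * (a + 2)) * exp (a\<^sup>2 / 2)) / (N * (exp (a\<^sup>2) / 4))"
      using N \<mu>2 V by (intro frac_le mult_left_mono mult_mono) auto
    ultimately show ?thesis
      by simp
  qed
  have small: "2 * exp (a * t + a\<^sup>2) / (N * \<mu>) \<le> 4 * exp (a * t + a\<^sup>2 / 2) / N"
  proof -
    have "exp (a * t + a\<^sup>2) = exp (a * t + a\<^sup>2 / 2) * exp (a\<^sup>2 / 2)"
      by (simp flip: exp_add)
    moreover have "2 * exp (a * t + a\<^sup>2) / (N * \<mu>) \<le> 2 * exp (a * t + a\<^sup>2) / (N * (exp (a\<^sup>2 / 2) / 2))"
      using N \<mu> \<mu>_pos by (intro divide_left_mono mult_left_mono) auto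
    ultimately show ?thesis
      by simp
  qed
  have "(\<integral>x. sparc_ratio M a x \<partial>gauss_iid M)
      \<le> 4 * V / (N * \<mu>\<^sup>2) + exp (1 / 2 - t) + 2 * exp (a * t + a\<^sup>2) / (N * \<mu>)"
    using integral_sparc_ratio_le_moments[OF M a, of t] unfolding \<mu>_def V_def N_def .
  moreover have "(16 * exp (a\<^sup>2 / 2 + 2 * a) + 4 * exp (a * t + a\<^sup>2 / 2)) / N
      = 16 * exp (a\<^sup>2 / 2 + 2 * a) / N + 4 * exp (a * t + a\<^sup>2 / 2) / N"
    by (rule add_divide_distrib)
  ultimately show ?thesis
    using deviation small unfolding N_def by linarith
qed

lemma filterlim_ln_real_sequentially: "filterlim (\<lambda>n. ln (real n)) at_top sequentially"
  using filterlim_compose[OF ln_at_top filterlim_real_sequentially] .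

lemma tendsto_exp_sqrt_ln_minus_ln:
  assumes "0 < k"
  shows "(\<lambda>n. exp (b * sqrt (ln (real n)) - k * ln (real n))) \<longlonglongrightarrow> 0"
proof -
  have "((\<lambda>y. exp (b * sqrt y - k * y)) \<longlongrightarrow> 0) at_top"
    using assms by real_asymp
  then show ?thesis
    by (rule filterlim_compose[OF _ filterlim_ln_real_sequentially])
qed

lemma tendsto_exp_minus_sqrt_ln:
  assumes "0 < k"
  shows "(\<lambda>n. exp (b - k * sqrt (ln (real n)))) \<longlonglongrightarrow> 0"
proof -
  have "((\<lambda>y. exp (b - k * sqrt y)) \<longlongrightarrow> 0) at_top"
    using assms by real_asymp
  then show ?thesis
    by (rule filterlim_compose[OF _ filterlim_ln_real_sequentially])
qed

lemma sparc_E_at_log_eq: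
  assumes "0 < c" and "2 \<le> M"
  shows "sparc_E M (1 / (c * ln (real M)))
    = (\<integral>x. sparc_ratio M (sqrt c * sqrt (ln (real M))) x \<partial>gauss_iid M)"
proof -
  have "0 < ln (real M)"
    using assms by simp
  then have "1 / sqrt (1 / (c * ln (real M))) = sqrt c * sqrt (ln (real M))"
    using assms by (simp add: real_sqrt_divide real_sqrt_mult)
  then show ?thesis
    using assms by (simp add: sparc_E_eq_integral_sparc_ratio \<open>0 < ln (real M)\<close>)
qed

lemma one_minus_sparc_E_at_log_le:
  assumes c: "2 < c" and M: "2 \<le> M"
  shows "1 - sparc_E M (1 / (c * ln (real M)))
    \<le> exp (- ((c - 2) / 4 * ln (real M))) + exp (1 / 2 - (c - 2) / (4 * sqrt c) * sqrt (ln (real M)))"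
proof -
  define L where "L = ln (real M)"
  define a where "a = sqrt c * sqrt L"
  define t where "t = (c - 2) / (4 * sqrt c) * sqrt L"
  have L: "0 < L"
    using M by (simp add: L_def)
  have a2: "a\<^sup>2 = c * L"
    using c L by (simp add: a_def power_mult_distrib)
  have "a * t = (c - 2) / (4 * sqrt c) * sqrt c * (sqrt L)\<^sup>2"
    by (simp add: a_def t_def power2_eq_square ac_simps)
  also have "\<dots> = (c - 2) / 4 * L"
    using c L by simp
  finally have at: "a * t = (c - 2) / 4 * L" .
  have "(real M - 1) * exp (a * t - a\<^sup>2 / 2) \<le> exp L * exp (a * t - a\<^sup>2 / 2)"
    using M by (simp add: L_def)
  also have "\<dots> = exp (- ((c - 2) / 4 * L))"
    unfolding at a2 by (simp add: field_simps flip: exp_add)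
  finally have "(real M - 1) * exp (a * t - a\<^sup>2 / 2) \<le> exp (- ((c - 2) / 4 * L))" .
  moreover have "0 < a"
    using c L by (simp add: a_def)
  ultimately show ?thesis
    using one_minus_integral_sparc_ratio_le[of M a t] sparc_E_at_log_eq[of c M] M c
    unfolding L_def a_def t_def by simp
qed

lemma sparc_E_at_log_le:
  assumes c: "0 < c" "c < 2" and M: "2 \<le> M"
  shows "sparc_E M (1 / (c * ln (real M)))
    \<le> 32 * exp (2 * sqrt c * sqrt (ln (real M)) - (1 - c / 2) * ln (real M))
      + 8 * exp (- ((1 - c / 2) / 2 * ln (real M)))
      + exp (1 / 2 - (2 - c) / (4 * sqrt c) * sqrt (ln (real M)))"
proof -
  define L where "L = ln (real M)"
  define a where "a = sqrt c * sqrt L"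
  define t where "t = (2 - c) / (4 * sqrt c) * sqrt L"
  have L: "0 < L"
    using M by (simp add: L_def)
  have a: "0 < a"
    using c L by (simp add: a_def)
  have a2: "a\<^sup>2 = c * L"
    using c L by (simp add: a_def power_mult_distrib)
  have "a * t = (2 - c) / (4 * sqrt c) * sqrt c * (sqrt L)\<^sup>2"
    by (simp add: a_def t_def power2_eq_square ac_simps)
  also have "\<dots> = (1 - c / 2) / 2 * L"
    using c L by (simp add: field_simps)
  finally have at: "a * t = (1 - c / 2) / 2 * L" .
  have "exp L / 2 \<le> real M - 1"
    using M by (simp add: L_def)
  then have "(16 * exp (a\<^sup>2 / 2 + 2 * a) + 4 * exp (a * t + a\<^sup>2 / 2)) / (real M - 1)
      \<le> (16 * exp (a\<^sup>2 / 2 + 2 * a) + 4 * exp (a * t + a\<^sup>2 / 2)) / (exp L / 2)"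
    using M by (intro divide_left_mono) (auto intro!: add_nonneg_nonneg mult_pos_pos)
  also have "\<dots> = 32 * exp (a\<^sup>2 / 2 + 2 * a - L) + 8 * exp (a * t + a\<^sup>2 / 2 - L)"
    unfolding exp_diff by (simp add: add_divide_distrib)
  also have "\<dots> = 32 * exp (2 * sqrt c * sqrt L - (1 - c / 2) * L) + 8 * exp (- ((1 - c / 2) / 2 * L))"
    unfolding at a2 by (simp add: a_def algebra_simps)
  finally show ?thesis
    using integral_sparc_ratio_le[OF M a, of t] sparc_E_at_log_eq[OF c(1) M]
    unfolding L_def a_def t_def by simp
qed

lemma sparc_E_tendsto_one:
  assumes c: "2 < c"
  shows "(\<lambda>M. sparc_E M (1 / (c * ln (real M)))) \<longlonglongrightarrow> 1"
proof -
  have s: "0 < (c - 2) / (4 * sqrt c)"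
    using c by simp
  have "(\<lambda>M. 1 - exp (- ((c - 2) / 4 * ln (real M)))
      - exp (1 / 2 - (c - 2) / (4 * sqrt c) * sqrt (ln (real M)))) \<longlonglongrightarrow> 1 - 0 - 0"
    using tendsto_exp_sqrt_ln_minus_ln[of "(c - 2) / 4" 0] tendsto_exp_minus_sqrt_ln[OF s, of "1 / 2"] c
    by (intro tendsto_diff) simp_all
  then have lim: "(\<lambda>M. 1 - exp (- ((c - 2) / 4 * ln (real M)))
      - exp (1 / 2 - (c - 2) / (4 * sqrt c) * sqrt (ln (real M)))) \<longlonglongrightarrow> 1"
    by simp
  have "eventually (\<lambda>M. 1 - exp (- ((c - 2) / 4 * ln (real M)))
      - exp (1 / 2 - (c - 2) / (4 * sqrt c) * sqrt (ln (real M)))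
      \<le> sparc_E M (1 / (c * ln (real M)))) sequentially"
    using eventually_ge_at_top[of 2]
    by eventually_elim (use one_minus_sparc_E_at_log_le[OF c] in fastforce)
  moreover have "eventually (\<lambda>M. sparc_E M (1 / (c * ln (real M))) \<le> 1) sequentially"
    using eventually_ge_at_top[of 2]
    by eventually_elim (use c in \<open>simp add: sparc_E_at_log_eq integral_sparc_ratio_le_one\<close>)
  ultimately show ?thesis
    by (rule tendsto_sandwich[OF _ _ lim tendsto_const])
qed

lemma sparc_E_tendsto_zero:
  assumes c: "0 < c" "c < 2"
  shows "(\<lambda>M. sparc_E M (1 / (c * ln (real M)))) \<longlonglongrightarrow> 0"
proof -
  have k: "0 < 1 - c / 2" "0 < (1 - c / 2) / 2" and s: "0 < (2 - c) / (4 * sqrt c)"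
    using c by simp_all
  have "(\<lambda>M. exp (- ((1 - c / 2) / 2 * ln (real M)))) \<longlonglongrightarrow> 0"
    using tendsto_exp_sqrt_ln_minus_ln[OF k(2), of 0] by simp
  then have "(\<lambda>M. 32 * exp (2 * sqrt c * sqrt (ln (real M)) - (1 - c / 2) * ln (real M))
      + 8 * exp (- ((1 - c / 2) / 2 * ln (real M)))
      + exp (1 / 2 - (2 - c) / (4 * sqrt c) * sqrt (ln (real M)))) \<longlonglongrightarrow> 32 * 0 + 8 * 0 + 0"
    using k s by (intro tendsto_add tendsto_mult_left tendsto_exp_sqrt_ln_minus_ln
        tendsto_exp_minus_sqrt_ln) simp_all
  then have lim: "(\<lambda>M. 32 * exp (2 * sqrt c * sqrt (ln (real M)) - (1 - c / 2) * ln (real M))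
      + 8 * exp (- ((1 - c / 2) / 2 * ln (real M)))
      + exp (1 / 2 - (2 - c) / (4 * sqrt c) * sqrt (ln (real M)))) \<longlonglongrightarrow> 0"
    by simp
  have "eventually (\<lambda>M. 0 \<le> sparc_E M (1 / (c * ln (real M)))) sequentially"
    using eventually_ge_at_top[of 2]
    by eventually_elim (use c in \<open>simp add: sparc_E_at_log_eq integral_sparc_ratio_nonneg\<close>)
  moreover have "eventually (\<lambda>M. sparc_E M (1 / (c * ln (real M)))
      \<le> 32 * exp (2 * sqrt c * sqrt (ln (real M)) - (1 - c / 2) * ln (real M))
        + 8 * exp (- ((1 - c / 2) / 2 * ln (real M)))
        + exp (1 / 2 - (2 - c) / (4 * sqrt c) * sqrt (ln (real M)))) sequentially"
    using eventually_ge_at_top[of 2] by eventually_elim (rule sparc_E_at_log_le[OF c])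
  ultimately show ?thesis
    by (rule tendsto_sandwich[OF _ _ tendsto_const lim])
qed

theorem mainTheorem7:
  fixes R q :: real
  assumes "R > 0" and "q > 0"
  shows "(q > 2 * R \<longrightarrow> ((\<lambda>M. sparc_E M (R / (q * ln (real M)))) \<longlonglongrightarrow> 1))
       \<and> (q < 2 * R \<longrightarrow> ((\<lambda>M. sparc_E M (R / (q * ln (real M)))) \<longlonglongrightarrow> 0))"
proof -
  have "R / (q * ln (real M)) = 1 / (q / R * ln (real M))" for M
    using assms by simp
  moreover have "q > 2 * R \<longleftrightarrow> 2 < q / R" and "q < 2 * R \<longleftrightarrow> q / R < 2"
    using assms by (simp_all add: field_simps)
  ultimately show ?thesis
    using sparc_E_tendsto_one[of "q / R"] sparc_E_tendsto_zero[of "q / R"] assms by simp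
qed

end
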